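(* Let $\mathcal{M}=(\mathcal{S},\mathcal{A},\mathcal{P},r,p_0)$ be an infinite-horizon MDP as in the context, $D\in\mathbb{N}$, $\gamma_0,\dots,\gamma_D\in(0,1)$, and $\pi$ a stationary policy. For $d\le D$ let $V_d^\pi(s):=\mathbb{E}_\pi\big[\sum_{t=0}^\infty\Phi_d(t)r(s_t,a_t)\mid s_0=s\big]$. Then for every state $s\in\mathcal{S}$, $$V_D^\pi(s)=\mathbb{E}_{a\sim\pi(s),\,s'\sim\mathcal{P}(s,a)}\Big[r(s,a)+\sum_{d=0}^D\gamma_d\,V_d^\pi(s')\Big].$$
   Context: $\mathcal{S}\subseteq\mathbb{R}^{k}$, $\mathcal{A}\subseteq\mathbb{R}^{k'}$ finite or compact, $\mathcal{P}:\mathcal{S}\times\mathcal{A}\to\Delta(\mathcal{S})$ a transition kernel, $r:\mathcal{S}\times\mathcal{A}\to\mathbb{R}$ a continuous reward. $\mathbb{E}_\pi$ is the expectation over trajectories with $a_t\sim\pi(s_t)$, $s_{t+1}\sim\mathcal{P}(s_t,a_t)$. For $d\le D$, $$\Phi_d(t):=\sum_{\substack{(a_0,\dots,a_d)\in\mathbb{N}^{d+1}\\ a_0+\dots+a_d=t}}\ \prod_{i=0}^{d}\gamma_i^{a_i}.$$ *)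

theory Defs
  imports "HOL-Probability.Probability"
begin

text \<open>Discount weight Phi_d(t): sum over (a_0,...,a_d) in N^(d+1) with a_0+...+a_d = t
  of prod_i gamma_i^(a_i). Tuples are encoded as functions nat => nat vanishing above d.\<close>
definition Phi :: "(nat \<Rightarrow> real) \<Rightarrow> nat \<Rightarrow> nat \<Rightarrow> real" where
  "Phi \<gamma> d t =
     (\<Sum>f \<in> {f :: nat \<Rightarrow> nat. (\<forall>i. d < i \<longrightarrow> f i = 0) \<and> (\<Sum>i\<le>d. f i) = t}.
        \<Prod>i\<le>d. \<gamma> i ^ f i)"

primrec state_dist ::
  "'s measure \<Rightarrow> ('s \<Rightarrow> 'a measure) \<Rightarrow> ('s \<times> 'a \<Rightarrow> 's measure) \<Rightarrow> 's \<Rightarrow> nat \<Rightarrow> 's measure" where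
  "state_dist \<M> \<pi> P s 0 = return \<M> s"
| "state_dist \<M> \<pi> P s (Suc t) = bind (state_dist \<M> \<pi> P s t) (\<lambda>x. bind (\<pi> x) (\<lambda>a. P (x, a)))"

definition exp_reward ::
  "'s measure \<Rightarrow> ('s \<Rightarrow> 'a measure) \<Rightarrow> ('s \<times> 'a \<Rightarrow> 's measure) \<Rightarrow> ('s \<times> 'a \<Rightarrow> real)
     \<Rightarrow> 's \<Rightarrow> nat \<Rightarrow> real" where
  "exp_reward \<M> \<pi> P r s t = (\<integral>x. (\<integral>a. r (x, a) \<partial>\<pi> x) \<partial>state_dist \<M> \<pi> P s t)"

text \<open>V_d^pi(s) = E_pi[ sum_t Phi_d(t) r(s_t,a_t) | s_0 = s ]
  (by linearity, written as sum_t Phi_d(t) E_pi[r(s_t,a_t) | s_0 = s]; rewards bounded).\<close>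
definition value_fn ::
  "'s measure \<Rightarrow> ('s \<Rightarrow> 'a measure) \<Rightarrow> ('s \<times> 'a \<Rightarrow> 's measure) \<Rightarrow> ('s \<times> 'a \<Rightarrow> real)
     \<Rightarrow> (nat \<Rightarrow> real) \<Rightarrow> nat \<Rightarrow> 's \<Rightarrow> real" where
  "value_fn \<M> \<pi> P r \<gamma> d s = (\<Sum>t. Phi \<gamma> d t * exp_reward \<M> \<pi> P r s t)"

end

theory Submission
  imports Defs
begin

text \<open>
  Write V_d(s) = \<Sum>_t \<Phi>_d(t) E_t(s), where E_t(s) is the expected reward at time t.
  Since \<Phi>_(d+1) is the Cauchy product of \<Phi>_d with the geometric sequence of \<gamma>_(d+1),
  each \<Phi>_d is summable, \<Phi>_D(0) = 1 and \<Phi>_D(t+1) = \<Sum>_(d\<le>D) \<gamma>_d \<Phi>_d(t).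
  The Markov property gives E_(t+1)(s) = \<integral> E_t dK_s for the one-step kernel
  K_s = \<pi>(s) \<bind> P(s, -). Splitting off the term t = 0 of V_D(s) therefore yields
  V_D(s) = E_0(s) + \<Sum>_(d\<le>D) \<gamma>_d \<integral> V_d dK_s; bounded rewards and summable weights
  justify exchanging the series with the integrals.
\<close>

definition weak_compositions :: "nat \<Rightarrow> nat \<Rightarrow> (nat \<Rightarrow> nat) set" where
  "weak_compositions d t = {f. (\<forall>i. d < i \<longrightarrow> f i = 0) \<and> (\<Sum>i\<le>d. f i) = t}"

lemma Phi_eq_sum_weak_compositions:
  "Phi \<gamma> d t = (\<Sum>f\<in>weak_compositions d t. \<Prod>i\<le>d. \<gamma> i ^ f i)"
  unfolding Phi_def weak_compositions_def ..

lemma weak_composition_le: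
  assumes "f \<in> weak_compositions d t" "i \<le> d"
  shows "f i \<le> t"
proof -
  have "f i \<le> (\<Sum>i\<le>d. f i)" using assms(2) by (intro member_le_sum) auto
  then show ?thesis using assms(1) by (simp add: weak_compositions_def)
qed

lemma finite_weak_compositions: "finite (weak_compositions d t)"
proof (rule finite_subset)
  show "weak_compositions d t \<subseteq> {f. \<forall>x. (x \<in> {..d} \<longrightarrow> f x \<in> {..t}) \<and> (x \<notin> {..d} \<longrightarrow> f x = 0)}"
    by (auto simp: weak_composition_le) (simp add: weak_compositions_def)
  show "finite {f. \<forall>x. (x \<in> {..d} \<longrightarrow> f x \<in> {..t}) \<and> (x \<notin> {..d} \<longrightarrow> f x = 0)}"
    by (intro finite_set_of_finite_funs) simp_all
qed

lemma Phi_0_left: "Phi \<gamma> 0 t = \<gamma> 0 ^ t"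
proof -
  have "weak_compositions 0 t = {(\<lambda>i. 0)(0 := t)}"
    by (auto simp: weak_compositions_def fun_eq_iff)
  then show ?thesis by (simp add: Phi_eq_sum_weak_compositions)
qed

lemma weak_compositions_Suc_last:
  assumes "j \<le> t"
  shows "{f \<in> weak_compositions (Suc d) t. f (Suc d) = j}
           = (\<lambda>g. g(Suc d := j)) ` weak_compositions d (t - j)"
proof (intro equalityI subsetI)
  fix f assume "f \<in> {f \<in> weak_compositions (Suc d) t. f (Suc d) = j}"
  then have f: "\<forall>i. Suc d < i \<longrightarrow> f i = 0" "(\<Sum>i\<le>d. f i) = t - j" "f (Suc d) = j"
    by (auto simp: weak_compositions_def)
  have "(\<Sum>i\<le>d. (f(Suc d := 0)) i) = (\<Sum>i\<le>d. f i)" by (intro sum.cong) auto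
  with f have "f(Suc d := 0) \<in> weak_compositions d (t - j)"
    by (auto simp: weak_compositions_def)
  moreover have "f = (f(Suc d := 0))(Suc d := j)" using f(3) by auto
  ultimately show "f \<in> (\<lambda>g. g(Suc d := j)) ` weak_compositions d (t - j)" by blast
next
  fix f assume "f \<in> (\<lambda>g. g(Suc d := j)) ` weak_compositions d (t - j)"
  then obtain g where g: "g \<in> weak_compositions d (t - j)" and f: "f = g(Suc d := j)" by blast
  have "(\<Sum>i\<le>d. f i) = (\<Sum>i\<le>d. g i)" unfolding f by (intro sum.cong) auto
  then show "f \<in> {f \<in> weak_compositions (Suc d) t. f (Suc d) = j}"
    using g assms by (auto simp: weak_compositions_def f)
qed

lemma Phi_Suc_left: "Phi \<gamma> (Suc d) t = (\<Sum>j\<le>t. Phi \<gamma> d (t - j) * \<gamma> (Suc d) ^ j)"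
proof -
  let ?F = "\<lambda>d t. weak_compositions d t" and ?w = "\<lambda>d f. \<Prod>i\<le>d. \<gamma> i ^ f i"
  have "(\<lambda>f. f (Suc d)) ` ?F (Suc d) t \<subseteq> {..t}"
    by (auto intro: weak_composition_le)
  then have "Phi \<gamma> (Suc d) t = (\<Sum>j\<le>t. \<Sum>f\<in>{f \<in> ?F (Suc d) t. f (Suc d) = j}. ?w (Suc d) f)"
    unfolding Phi_eq_sum_weak_compositions
    by (intro sum.group[symmetric] finite_weak_compositions) simp_all
  also have "\<dots> = (\<Sum>j\<le>t. \<Sum>g\<in>?F d (t - j). ?w d g * \<gamma> (Suc d) ^ j)"
  proof (rule sum.cong[OF refl])
    fix j assume "j \<in> {..t}"
    moreover have "inj_on (\<lambda>g. g(Suc d := j)) (?F d (t - j))"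
      by (rule inj_onI) (auto simp: weak_compositions_def fun_eq_iff, metis lessI)
    moreover have "?w (Suc d) (g(Suc d := j)) = ?w d g * \<gamma> (Suc d) ^ j" for g
      by (simp add: prod.cong[of "{..d}" _ "\<lambda>i. \<gamma> i ^ (g(Suc d := j)) i" "\<lambda>i. \<gamma> i ^ g i"])
    ultimately show "(\<Sum>f\<in>{f \<in> ?F (Suc d) t. f (Suc d) = j}. ?w (Suc d) f)
        = (\<Sum>g\<in>?F d (t - j). ?w d g * \<gamma> (Suc d) ^ j)"
      by (simp add: weak_compositions_Suc_last sum.reindex)
  qed
  also have "\<dots> = (\<Sum>j\<le>t. Phi \<gamma> d (t - j) * \<gamma> (Suc d) ^ j)"
    by (simp add: Phi_eq_sum_weak_compositions sum_distrib_right)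
  finally show ?thesis .
qed

lemma Phi_0_right: "Phi \<gamma> d 0 = 1"
  by (induction d) (simp_all add: Phi_0_left Phi_Suc_left)

lemma Phi_Suc_Suc: "Phi \<gamma> (Suc d) (Suc t) = Phi \<gamma> d (Suc t) + \<gamma> (Suc d) * Phi \<gamma> (Suc d) t"
  unfolding Phi_Suc_left[of \<gamma> d "Suc t"] Phi_Suc_left[of \<gamma> d t]
  by (simp add: sum.atMost_Suc_shift sum_distrib_left mult_ac del: sum.atMost_Suc)

lemma Phi_Suc_right: "Phi \<gamma> D (Suc t) = (\<Sum>d\<le>D. \<gamma> d * Phi \<gamma> d t)"
  by (induction D) (simp_all add: Phi_0_left Phi_Suc_Suc)

lemma Phi_nonneg: "(\<And>i. i \<le> d \<Longrightarrow> 0 \<le> \<gamma> i) \<Longrightarrow> 0 \<le> Phi \<gamma> d t"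
  unfolding Phi_def by (intro sum_nonneg prod_nonneg) auto

lemma summable_Phi:
  assumes "\<And>i. i \<le> d \<Longrightarrow> 0 \<le> \<gamma> i \<and> \<gamma> i < 1"
  shows "summable (Phi \<gamma> d)"
  using assms
proof (induction d)
  case 0
  then show ?case by (simp add: Phi_0_left summable_geometric)
next
  case (Suc d)
  have "summable (\<lambda>j. norm (\<gamma> (Suc d) ^ j))"
    using Suc.prems[of "Suc d"] by (simp add: summable_geometric)
  moreover have "summable (\<lambda>t. norm (Phi \<gamma> d t))"
    using Suc by (simp add: Phi_nonneg)
  ultimately have "summable (\<lambda>t. \<Sum>j\<le>t. \<gamma> (Suc d) ^ j * Phi \<gamma> d (t - j))"
    by (rule summable_Cauchy_product)
  then show ?case by (simp add: Phi_Suc_left[abs_def] mult.commute)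
qed

lemma summable_norm_weighted_bounded:
  fixes w g :: "nat \<Rightarrow> real"
  assumes "summable w" "\<And>t. 0 \<le> w t" "\<And>t. \<bar>g t\<bar> \<le> B"
  shows "summable (\<lambda>t. norm (w t * g t))"
  by (rule summable_comparison_test'[where g="\<lambda>t. w t * B", OF summable_mult2[OF assms(1)]])
     (use assms in \<open>auto simp: abs_mult intro: mult_left_mono\<close>)

lemma abs_suminf_weighted_le:
  fixes w g :: "nat \<Rightarrow> real"
  assumes "summable w" "\<And>t. 0 \<le> w t" "\<And>t. \<bar>g t\<bar> \<le> B"
  shows "\<bar>\<Sum>t. w t * g t\<bar> \<le> (\<Sum>t. w t) * B"
proof -
  have "\<bar>\<Sum>t. w t * g t\<bar> \<le> (\<Sum>t. norm (w t * g t))"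
    using summable_norm[OF summable_norm_weighted_bounded[OF assms]] by simp
  also have "\<dots> \<le> (\<Sum>t. w t * B)"
    using assms by (intro suminf_le summable_norm_weighted_bounded summable_mult2)
                   (auto simp: abs_mult intro: mult_left_mono)
  also have "\<dots> = (\<Sum>t. w t) * B"
    using assms(1) by (rule suminf_mult2[symmetric])
  finally show ?thesis .
qed

lemma (in prob_space) integrable_bounded:
  fixes f :: "'a \<Rightarrow> real"
  assumes "f \<in> borel_measurable M" "\<And>x. x \<in> space M \<Longrightarrow> \<bar>f x\<bar> \<le> B"
  shows "integrable M f"
  using assms by (intro integrable_const_bound[where B=B] AE_I2) auto

lemma (in prob_space) abs_integral_le_bound:
  fixes f :: "'a \<Rightarrow> real"
  assumes "f \<in> borel_measurable M" "\<And>x. x \<in> space M \<Longrightarrow> \<bar>f x\<bar> \<le> B"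
  shows "\<bar>\<integral>x. f x \<partial>M\<bar> \<le> B"
proof -
  have "\<bar>\<integral>x. f x \<partial>M\<bar> \<le> (\<integral>x. \<bar>f x\<bar> \<partial>M)" by (rule integral_abs_bound)
  also have "\<dots> \<le> B"
    using assms by (intro integral_le_const integrable_bounded[where B=B] AE_I2) auto
  finally show ?thesis .
qed

lemma (in prob_space) integral_suminf_weighted_bounded:
  fixes w :: "nat \<Rightarrow> real" and g :: "nat \<Rightarrow> 'a \<Rightarrow> real"
  assumes "summable w" "\<And>t. 0 \<le> w t"
    and "\<And>t. g t \<in> borel_measurable M" "\<And>t x. x \<in> space M \<Longrightarrow> \<bar>g t x\<bar> \<le> B"
  shows "(\<integral>x. (\<Sum>t. w t * g t x) \<partial>M) = (\<Sum>t. w t * (\<integral>x. g t x \<partial>M))"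
proof -
  have "(\<integral>x. (\<Sum>t. w t * g t x) \<partial>M) = (\<Sum>t. \<integral>x. w t * g t x \<partial>M)"
  proof (rule integral_suminf)
    show "integrable M (\<lambda>x. w t * g t x)" for t
      using assms by (intro integrable_mult_right integrable_bounded) auto
    show "AE x in M. summable (\<lambda>t. norm (w t * g t x))"
      using assms by (intro AE_I2 summable_norm_weighted_bounded) auto
    have "\<bar>\<integral>x. norm (w t * g t x) \<partial>M\<bar> \<le> w t * \<bar>B\<bar>" for t
      using assms by (intro abs_integral_le_bound)
                     (auto simp: abs_mult intro!: mult_left_mono order_trans[OF _ abs_ge_self])
    then show "summable (\<lambda>t. \<integral>x. norm (w t * g t x) \<partial>M)"
      by (intro summable_comparison_test'[OF summable_mult2[OF assms(1)]]) auto
  qed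
  then show ?thesis by simp
qed

lemma prob_kernel_space:
  assumes "K \<in> M \<rightarrow>\<^sub>M prob_algebra N" "x \<in> space M"
  shows "prob_space (K x)" "sets (K x) = sets N" "space (K x) = space N"
proof -
  have "K x \<in> space (prob_algebra N)" using measurable_space[OF assms] .
  then show "prob_space (K x)" "sets (K x) = sets N" by (simp_all add: space_prob_algebra)
  then show "space (K x) = space N" by (intro sets_eq_imp_space_eq) simp
qed

lemma measurable_prob_kernel_source:
  assumes "K \<in> M \<rightarrow>\<^sub>M prob_algebra N" "x \<in> space M"
  shows "measurable (K x) L = measurable N L"
  using prob_kernel_space(2)[OF assms] by (rule measurable_cong_sets) simp

lemma integral_prob_kernel_measurable:
  fixes h :: "'b \<Rightarrow> real"
  assumes "K \<in> M \<rightarrow>\<^sub>M prob_algebra N" "h \<in> borel_measurable N"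
  shows "(\<lambda>x. \<integral>y. h y \<partial>K x) \<in> borel_measurable M"
  using measurable_compose[OF measurable_prob_algebraD[OF assms(1)]
                              integral_measurable_subprob_algebra[OF assms(2)]] .

lemma abs_integral_prob_kernel_le:
  fixes h :: "'b \<Rightarrow> real"
  assumes "K \<in> M \<rightarrow>\<^sub>M prob_algebra N" "x \<in> space M"
    and "h \<in> borel_measurable N" "\<And>y. y \<in> space N \<Longrightarrow> \<bar>h y\<bar> \<le> B"
  shows "\<bar>\<integral>y. h y \<partial>K x\<bar> \<le> B"
  using assms
  by (intro prob_space.abs_integral_le_bound prob_kernel_space(1)[OF assms(1,2)])
     (simp_all add: measurable_prob_kernel_source prob_kernel_space(3))

lemma integrable_prob_kernel_bounded:
  fixes h :: "'b \<Rightarrow> real"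
  assumes "K \<in> M \<rightarrow>\<^sub>M prob_algebra N" "x \<in> space M"
    and "h \<in> borel_measurable N" "\<And>y. y \<in> space N \<Longrightarrow> \<bar>h y\<bar> \<le> B"
  shows "integrable (K x) h"
  using assms
  by (intro prob_space.integrable_bounded prob_kernel_space(1)[OF assms(1,2)])
     (simp_all add: measurable_prob_kernel_source prob_kernel_space(3))

lemma integral_bind_prob_kernel:
  fixes h :: "'b \<Rightarrow> real"
  assumes "prob_space M" "K \<in> M \<rightarrow>\<^sub>M prob_algebra N"
    and "h \<in> borel_measurable N" "\<And>y. y \<in> space N \<Longrightarrow> \<bar>h y\<bar> \<le> B"
  shows "(\<integral>y. h y \<partial>(M \<bind> K)) = (\<integral>x. (\<integral>y. h y \<partial>K x) \<partial>M)"
proof (rule integral_bind[OF assms(3,4) measurable_prob_algebraD[OF assms(2)], where B'=1])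
  show "finite_measure M" using assms(1) by (rule prob_space.finite_measure)
  have "emeasure (K x) (space (K x)) = 1" if "x \<in> space M" for x
    using prob_kernel_space(1)[OF assms(2) that] by (rule prob_space.emeasure_space_1)
  then show "AE x in M. emeasure (K x) (space (K x)) \<le> ennreal 1" by (intro AE_I2) simp
qed

lemma measurable_continuous_on_pair_restrict:
  fixes f :: "'a::second_countable_topology \<times> 'b::second_countable_topology \<Rightarrow> 'c::topological_space"
  assumes "continuous_on (X \<times> Y) f"
  shows "f \<in> restrict_space borel X \<Otimes>\<^sub>M restrict_space borel Y \<rightarrow>\<^sub>M borel"
proof -
  let ?M = "restrict_space borel X \<Otimes>\<^sub>M restrict_space borel Y"
  have "(\<lambda>z. (fst z, snd z)) \<in> ?M \<rightarrow>\<^sub>M borel \<Otimes>\<^sub>M borel"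
    by (intro measurable_Pair measurable_compose[OF measurable_fst measurable_restrict_space1]
              measurable_compose[OF measurable_snd measurable_restrict_space1]) simp_all
  then have "(\<lambda>z. z) \<in> ?M \<rightarrow>\<^sub>M restrict_space borel (X \<times> Y)"
    by (intro measurable_restrict_space2) (auto simp: space_pair_measure space_restrict_space borel_prod)
  from measurable_compose[OF this borel_measurable_continuous_on_restrict[OF assms]]
  show ?thesis by simp
qed

locale mdp =
  fixes S :: "'s measure" and A :: "'a measure"
    and \<pi> :: "'s \<Rightarrow> 'a measure" and P :: "'s \<times> 'a \<Rightarrow> 's measure"
  assumes transition_kernel: "P \<in> S \<Otimes>\<^sub>M A \<rightarrow>\<^sub>M prob_algebra S"
    and policy_kernel: "\<pi> \<in> S \<rightarrow>\<^sub>M prob_algebra A"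
begin

lemma transition_kernel_section: "x \<in> space S \<Longrightarrow> (\<lambda>a. P (x, a)) \<in> A \<rightarrow>\<^sub>M prob_algebra S"
  using transition_kernel by measurable

definition step_kernel :: "'s \<Rightarrow> 's measure" where
  "step_kernel x = \<pi> x \<bind> (\<lambda>a. P (x, a))"

lemma measurable_step_kernel: "step_kernel \<in> S \<rightarrow>\<^sub>M prob_algebra S"
proof -
  have "(\<lambda>(x, a). P (x, a)) \<in> S \<Otimes>\<^sub>M A \<rightarrow>\<^sub>M prob_algebra S"
    using transition_kernel by simp
  then show ?thesis
    unfolding step_kernel_def[abs_def] by (rule measurable_bind_prob_space2[OF policy_kernel])
qed

lemma state_dist_Suc_last: "state_dist S \<pi> P x (Suc t) = state_dist S \<pi> P x t \<bind> step_kernel"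
  by (simp add: step_kernel_def[abs_def])

lemma measurable_state_dist: "(\<lambda>x. state_dist S \<pi> P x t) \<in> S \<rightarrow>\<^sub>M prob_algebra S"
proof (induction t)
  case 0
  then show ?case by simp
next
  case (Suc t)
  then show ?case
    unfolding state_dist_Suc_last by (rule measurable_bind_prob_space[OF _ measurable_step_kernel])
qed

lemma state_dist_Suc_first:
  assumes "x \<in> space S"
  shows "state_dist S \<pi> P x (Suc t) = step_kernel x \<bind> (\<lambda>y. state_dist S \<pi> P y t)"
  using assms
proof (induction t arbitrary: x)
  case 0
  have "state_dist S \<pi> P x (Suc 0) = return S x \<bind> step_kernel"
    by (simp only: state_dist_Suc_last state_dist.simps(1))
  also have "\<dots> = step_kernel x"
    by (rule bind_return[OF measurable_prob_algebraD[OF measurable_step_kernel] 0])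
  also have "\<dots> = step_kernel x \<bind> return S"
    by (simp add: bind_return'' prob_kernel_space(2)[OF measurable_step_kernel 0])
  finally show ?case by simp
next
  case (Suc t)
  have "state_dist S \<pi> P x (Suc (Suc t))
      = (step_kernel x \<bind> (\<lambda>y. state_dist S \<pi> P y t)) \<bind> step_kernel"
    by (simp only: state_dist_Suc_last[of x "Suc t"] Suc.IH[OF Suc.prems])
  also have "\<dots> = step_kernel x \<bind> (\<lambda>y. state_dist S \<pi> P y t \<bind> step_kernel)"
    by (rule bind_assoc[OF _ measurable_prob_algebraD[OF measurable_step_kernel]])
       (simp add: measurable_prob_kernel_source[OF measurable_step_kernel Suc.prems]
                  measurable_prob_algebraD[OF measurable_state_dist])
  finally show ?case by (simp only: state_dist_Suc_last)
qed

lemma integral_step_kernel: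
  fixes h :: "'s \<Rightarrow> real"
  assumes "h \<in> borel_measurable S" "\<And>y. y \<in> space S \<Longrightarrow> \<bar>h y\<bar> \<le> B" "x \<in> space S"
  shows "(\<integral>y. h y \<partial>step_kernel x) = (\<integral>a. (\<integral>y. h y \<partial>P (x, a)) \<partial>\<pi> x)"
  unfolding step_kernel_def
  using prob_kernel_space(1)[OF policy_kernel assms(3)] _ assms(1,2)
  by (rule integral_bind_prob_kernel)
     (simp add: measurable_prob_kernel_source[OF policy_kernel assms(3)]
                transition_kernel_section[OF assms(3)])

definition policy_reward :: "('s \<times> 'a \<Rightarrow> real) \<Rightarrow> 's \<Rightarrow> real" where
  "policy_reward r x = (\<integral>a. r (x, a) \<partial>\<pi> x)"

lemma exp_reward_eq_integral_policy_reward: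
  "exp_reward S \<pi> P r x t = (\<integral>y. policy_reward r y \<partial>state_dist S \<pi> P x t)"
  unfolding exp_reward_def policy_reward_def ..

context
  fixes r :: "'s \<times> 'a \<Rightarrow> real" and B :: real
  assumes reward_measurable[measurable]: "r \<in> borel_measurable (S \<Otimes>\<^sub>M A)"
    and reward_bounded: "\<And>z. z \<in> space (S \<Otimes>\<^sub>M A) \<Longrightarrow> \<bar>r z\<bar> \<le> B"
begin

lemma measurable_policy_reward[measurable]: "policy_reward r \<in> borel_measurable S"
proof -
  have "(\<lambda>x. distr (\<pi> x) (S \<Otimes>\<^sub>M A) (Pair x)) \<in> S \<rightarrow>\<^sub>M prob_algebra (S \<Otimes>\<^sub>M A)"
    by (rule measurable_distr_prob_space2[OF policy_kernel]) simp
  then have "(\<lambda>x. \<integral>z. r z \<partial>distr (\<pi> x) (S \<Otimes>\<^sub>M A) (Pair x)) \<in> borel_measurable S"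
    by (rule integral_prob_kernel_measurable) simp
  moreover have "(\<integral>z. r z \<partial>distr (\<pi> x) (S \<Otimes>\<^sub>M A) (Pair x)) = policy_reward r x"
    if "x \<in> space S" for x
    using that unfolding policy_reward_def
    by (simp add: integral_distr measurable_prob_kernel_source[OF policy_kernel that])
  ultimately show ?thesis by (simp cong: measurable_cong)
qed

lemma abs_policy_reward_le: "x \<in> space S \<Longrightarrow> \<bar>policy_reward r x\<bar> \<le> B"
  unfolding policy_reward_def
  by (rule abs_integral_prob_kernel_le[OF policy_kernel]) (auto simp: space_pair_measure reward_bounded)

lemma measurable_exp_reward[measurable]: "(\<lambda>x. exp_reward S \<pi> P r x t) \<in> borel_measurable S"
  unfolding exp_reward_eq_integral_policy_reward
  by (rule integral_prob_kernel_measurable[OF measurable_state_dist measurable_policy_reward])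

lemma abs_exp_reward_le: "x \<in> space S \<Longrightarrow> \<bar>exp_reward S \<pi> P r x t\<bar> \<le> B"
  unfolding exp_reward_eq_integral_policy_reward
  by (rule abs_integral_prob_kernel_le[OF measurable_state_dist _ _ abs_policy_reward_le]) simp_all

lemma exp_reward_0: "x \<in> space S \<Longrightarrow> exp_reward S \<pi> P r x 0 = policy_reward r x"
  by (simp add: exp_reward_eq_integral_policy_reward integral_return)

lemma exp_reward_Suc:
  assumes "x \<in> space S"
  shows "exp_reward S \<pi> P r x (Suc t) = (\<integral>y. exp_reward S \<pi> P r y t \<partial>step_kernel x)"
  unfolding exp_reward_eq_integral_policy_reward state_dist_Suc_first[OF assms]
  using prob_kernel_space(1)[OF measurable_step_kernel assms] _
        measurable_policy_reward abs_policy_reward_le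
  by (rule integral_bind_prob_kernel)
     (simp add: measurable_prob_kernel_source[OF measurable_step_kernel assms] measurable_state_dist)

lemma policy_reward_add_integral_step_kernel:
  fixes h :: "'s \<Rightarrow> real"
  assumes h: "h \<in> borel_measurable S" "\<And>y. y \<in> space S \<Longrightarrow> \<bar>h y\<bar> \<le> C" and x: "x \<in> space S"
  shows "policy_reward r x + (\<integral>y. h y \<partial>step_kernel x)
           = (\<integral>a. (\<integral>y. r (x, a) + h y \<partial>P (x, a)) \<partial>\<pi> x)"
proof -
  have "integrable (\<pi> x) (\<lambda>a. r (x, a))"
    by (rule integrable_prob_kernel_bounded[OF policy_kernel x, where B=B])
       (auto simp: space_pair_measure reward_bounded x)
  moreover have "integrable (\<pi> x) (\<lambda>a. \<integral>y. h y \<partial>P (x, a))"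
    by (rule integrable_prob_kernel_bounded[OF policy_kernel x
             integral_prob_kernel_measurable[OF transition_kernel_section[OF x] h(1)]]
             abs_integral_prob_kernel_le[OF transition_kernel_section[OF x] _ h])+
  ultimately have "policy_reward r x + (\<integral>y. h y \<partial>step_kernel x)
      = (\<integral>a. r (x, a) + (\<integral>y. h y \<partial>P (x, a)) \<partial>\<pi> x)"
    by (simp add: policy_reward_def integral_step_kernel[OF h x])
  also have "\<dots> = (\<integral>a. (\<integral>y. r (x, a) + h y \<partial>P (x, a)) \<partial>\<pi> x)"
  proof (rule Bochner_Integration.integral_cong[OF refl])
    fix a assume "a \<in> space (\<pi> x)"
    then have a: "a \<in> space A" by (simp add: prob_kernel_space(3)[OF policy_kernel x])
    interpret prob_space "P (x, a)"
      by (rule prob_kernel_space(1)[OF transition_kernel_section[OF x] a])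
    show "r (x, a) + (\<integral>y. h y \<partial>P (x, a)) = (\<integral>y. r (x, a) + h y \<partial>P (x, a))"
      using integrable_prob_kernel_bounded[OF transition_kernel_section[OF x] a h]
      by (simp add: prob_space)
  qed
  finally show ?thesis .
qed

lemma measurable_value_fn[measurable]: "value_fn S \<pi> P r \<gamma> d \<in> borel_measurable S"
  unfolding value_fn_def[abs_def] by measurable

context
  fixes \<gamma> :: "nat \<Rightarrow> real" and D :: nat
  assumes discounts: "\<And>d. d \<le> D \<Longrightarrow> 0 \<le> \<gamma> d \<and> \<gamma> d < 1"
begin

lemma summable_Phi_discounts: "d \<le> D \<Longrightarrow> summable (Phi \<gamma> d)"
  by (rule summable_Phi) (simp add: discounts)

lemma Phi_discounts_nonneg: "d \<le> D \<Longrightarrow> 0 \<le> Phi \<gamma> d t"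
  by (rule Phi_nonneg) (simp add: discounts)

lemma abs_value_fn_le:
  "d \<le> D \<Longrightarrow> x \<in> space S \<Longrightarrow> \<bar>value_fn S \<pi> P r \<gamma> d x\<bar> \<le> (\<Sum>t. Phi \<gamma> d t) * B"
  unfolding value_fn_def
  by (intro abs_suminf_weighted_le summable_Phi_discounts Phi_discounts_nonneg abs_exp_reward_le)

lemma integral_value_fn_step_kernel:
  assumes "d \<le> D" "x \<in> space S"
  shows "(\<integral>y. value_fn S \<pi> P r \<gamma> d y \<partial>step_kernel x)
           = (\<Sum>t. Phi \<gamma> d t * exp_reward S \<pi> P r x (Suc t))"
  unfolding value_fn_def exp_reward_Suc[OF assms(2)]
  using prob_kernel_space[OF measurable_step_kernel assms(2)] assms(1)
  by (intro prob_space.integral_suminf_weighted_bounded[where B=B] summable_Phi_discounts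
               Phi_discounts_nonneg)
     (auto simp: measurable_prob_kernel_source[OF measurable_step_kernel assms(2)] abs_exp_reward_le)

lemma value_fn_first_step:
  assumes "x \<in> space S"
  shows "value_fn S \<pi> P r \<gamma> D x
           = policy_reward r x + (\<Sum>d\<le>D. \<gamma> d * (\<integral>y. value_fn S \<pi> P r \<gamma> d y \<partial>step_kernel x))"
proof -
  let ?E = "exp_reward S \<pi> P r x"
  have summable: "summable (\<lambda>t. Phi \<gamma> d t * ?E (f t))" if "d \<le> D" for d f
    using that assms
    by (intro summable_norm_cancel[OF summable_norm_weighted_bounded[where B=B]]
              summable_Phi_discounts Phi_discounts_nonneg abs_exp_reward_le)
  have "value_fn S \<pi> P r \<gamma> D x = Phi \<gamma> D 0 * ?E 0 + (\<Sum>t. Phi \<gamma> D (Suc t) * ?E (Suc t))"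
    unfolding value_fn_def using suminf_split_head[OF summable[of D id]] by simp
  also have "(\<Sum>t. Phi \<gamma> D (Suc t) * ?E (Suc t)) = (\<Sum>t. \<Sum>d\<le>D. \<gamma> d * (Phi \<gamma> d t * ?E (Suc t)))"
    by (simp add: Phi_Suc_right sum_distrib_left sum_distrib_right mult_ac)
  also have "\<dots> = (\<Sum>d\<le>D. \<Sum>t. \<gamma> d * (Phi \<gamma> d t * ?E (Suc t)))"
    by (intro suminf_sum summable_mult summable) simp
  also have "\<dots> = (\<Sum>d\<le>D. \<gamma> d * (\<integral>y. value_fn S \<pi> P r \<gamma> d y \<partial>step_kernel x))"
    using assms
    by (intro sum.cong refl) (simp add: suminf_mult summable integral_value_fn_step_kernel)
  finally show ?thesis by (simp add: Phi_0_right exp_reward_0[OF assms])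
qed

lemma bellman_equation:
  assumes "x \<in> space S"
  shows "value_fn S \<pi> P r \<gamma> D x
           = (\<integral>a. (\<integral>y. r (x, a) + (\<Sum>d\<le>D. \<gamma> d * value_fn S \<pi> P r \<gamma> d y) \<partial>P (x, a)) \<partial>\<pi> x)"
proof -
  define W where "W y = (\<Sum>d\<le>D. \<gamma> d * value_fn S \<pi> P r \<gamma> d y)" for y
  have W_measurable: "W \<in> borel_measurable S"
    unfolding W_def[abs_def] by measurable
  have W_bounded: "\<bar>W y\<bar> \<le> (\<Sum>d\<le>D. \<gamma> d * ((\<Sum>t. Phi \<gamma> d t) * B))" if "y \<in> space S" for y
    unfolding W_def using discounts
    by (intro order_trans[OF sum_abs] sum_mono) (simp add: abs_mult mult_left_mono abs_value_fn_le that)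
  have "(\<integral>y. W y \<partial>step_kernel x) = (\<Sum>d\<le>D. \<gamma> d * (\<integral>y. value_fn S \<pi> P r \<gamma> d y \<partial>step_kernel x))"
    unfolding W_def using assms
    by (subst Bochner_Integration.integral_sum)
       (auto intro!: integrable_prob_kernel_bounded[OF measurable_step_kernel] abs_value_fn_le)
  then have "value_fn S \<pi> P r \<gamma> D x = policy_reward r x + (\<integral>y. W y \<partial>step_kernel x)"
    by (simp add: value_fn_first_step[OF assms])
  also have "\<dots> = (\<integral>a. (\<integral>y. r (x, a) + W y \<partial>P (x, a)) \<partial>\<pi> x)"
    by (rule policy_reward_add_integral_step_kernel[OF W_measurable W_bounded assms])
  finally show ?thesis by (simp add: W_def)
qed

end

end

end

theorem proposition3:
  fixes S :: "(real ^ 'k) set" and A :: "(real ^ 'm) set"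
    and P :: "(real ^ 'k) \<times> (real ^ 'm) \<Rightarrow> (real ^ 'k) measure"
    and r :: "(real ^ 'k) \<times> (real ^ 'm) \<Rightarrow> real"
    and \<pi> :: "real ^ 'k \<Rightarrow> (real ^ 'm) measure"
    and \<gamma> :: "nat \<Rightarrow> real" and D :: nat and s :: "real ^ 'k"
  assumes A_fin_cpt: "finite A \<or> compact A"
    and P_kernel: "P \<in> restrict_space borel S \<Otimes>\<^sub>M restrict_space borel A
                        \<rightarrow>\<^sub>M prob_algebra (restrict_space borel S)"
    and r_cont: "continuous_on (S \<times> A) r"
    and r_bounded: "\<exists>B. \<forall>x\<in>S. \<forall>a\<in>A. \<bar>r (x, a)\<bar> \<le> B"
    and \<pi>_policy: "\<pi> \<in> restrict_space borel S \<rightarrow>\<^sub>M prob_algebra (restrict_space borel A)"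
    and \<gamma>_range: "\<And>d. d \<le> D \<Longrightarrow> 0 < \<gamma> d \<and> \<gamma> d < 1"
    and s_in: "s \<in> S"
  shows "value_fn (restrict_space borel S) \<pi> P r \<gamma> D s =
           (\<integral>a. (\<integral>s'. r (s, a) + (\<Sum>d\<le>D. \<gamma> d * value_fn (restrict_space borel S) \<pi> P r \<gamma> d s')
                    \<partial>P (s, a)) \<partial>\<pi> s)"
proof -
  interpret mdp "restrict_space borel S" "restrict_space borel A" \<pi> P
    using P_kernel \<pi>_policy by unfold_locales
  obtain B where "\<forall>x\<in>S. \<forall>a\<in>A. \<bar>r (x, a)\<bar> \<le> B"
    using r_bounded by blast
  then have "\<And>z. z \<in> space (restrict_space borel S \<Otimes>\<^sub>M restrict_space borel A) \<Longrightarrow> \<bar>r z\<bar> \<le> B"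
    by (auto simp: space_pair_measure space_restrict_space)
  moreover have "\<And>d. d \<le> D \<Longrightarrow> 0 \<le> \<gamma> d \<and> \<gamma> d < 1"
    using \<gamma>_range by (simp add: less_imp_le)
  moreover have "s \<in> space (restrict_space borel S)"
    using s_in by (simp add: space_restrict_space)
  ultimately show ?thesis
    by (rule bellman_equation[OF measurable_continuous_on_pair_restrict[OF r_cont]])
qed

end
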